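(* Let $\mathcal{G}$ be a hypergraph with rank $r(\mathcal{G})=r$. Then the strong chromatic number satisfies $\gamma(\mathcal{G})\le 1+(r-1)\lambda_{\max}(A_{\mathcal{G}})$, where $\lambda_{\max}(A_{\mathcal{G}})$ is the largest eigenvalue of $A_{\mathcal{G}}$.
   Context: A hypergraph $\mathcal{G}=(V,E)$ has a finite vertex set $V$ and a set $E$ of subsets of $V$ (edges), each of cardinality at least $2$. The rank $r(\mathcal{G})$ is the maximum cardinality of an edge. Two distinct vertices are adjacent if some edge contains both. The adjacency matrix $A_{\mathcal{G}}$ has $(A_{\mathcal{G}})_{ij}=\sum_{e\in E,\, i,j\in e}\frac{1}{|e|-1}$ for $i\ne j$ and zero diagonal. A strong vertex coloring assigns colors to vertices so that any two adjacent vertices get different colors; the strong chromatic number $\gamma(\mathcal{G})$ is the minimum number of colors in a strong vertex coloring. *)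

theory Defs
  imports "HOL-Analysis.Analysis"
begin

definition hypergraph :: "'n::finite set set \<Rightarrow> bool" where
  "hypergraph E \<longleftrightarrow> (\<forall>e\<in>E. card e \<ge> 2)"

definition hg_rank :: "'n::finite set set \<Rightarrow> nat" where
  "hg_rank E = (if E = {} then 0 else Max (card ` E))"

definition hg_adjacent :: "'n::finite set set \<Rightarrow> 'n \<Rightarrow> 'n \<Rightarrow> bool" where
  "hg_adjacent E i j \<longleftrightarrow> i \<noteq> j \<and> (\<exists>e\<in>E. i \<in> e \<and> j \<in> e)"

definition hg_adj_matrix :: "'n::finite set set \<Rightarrow> real^'n^'n" where
  "hg_adj_matrix E = (\<chi> i j. if i = j then 0
       else (\<Sum>e\<in>{e\<in>E. i \<in> e \<and> j \<in> e}. 1 / (real (card e) - 1)))"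

definition strong_coloring :: "'n::finite set set \<Rightarrow> ('n \<Rightarrow> nat) \<Rightarrow> nat \<Rightarrow> bool" where
  "strong_coloring E c k \<longleftrightarrow> (\<forall>v. c v < k) \<and> (\<forall>i j. hg_adjacent E i j \<longrightarrow> c i \<noteq> c j)"

definition strong_chromatic_number :: "'n::finite set set \<Rightarrow> nat" where
  "strong_chromatic_number E = (LEAST k. \<exists>c. strong_coloring E c k)"

definition is_eigenvalue :: "real^'n^'n \<Rightarrow> real \<Rightarrow> bool" where
  "is_eigenvalue A \<mu> \<longleftrightarrow> (\<exists>v. v \<noteq> 0 \<and> A *v v = \<mu> *\<^sub>R v)"

definition lambda_max :: "real^'n^'n \<Rightarrow> real" where
  "lambda_max A = Max {\<mu>. is_eigenvalue A \<mu>}"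

end

theory Submission
  imports Defs
begin

text \<open>Let \<open>\<lambda>\<close> be the largest eigenvalue of the (symmetric) adjacency matrix \<open>A\<close> and
  \<open>r\<close> the rank. Adjacent vertices \<open>i, j\<close> share an edge of size at most \<open>r\<close>, so
  \<open>A i j \<ge> 1/(r - 1)\<close>. Testing the Rayleigh bound \<open>x \<bullet> A x \<le> \<lambda> (x \<bullet> x)\<close> with the
  indicator vector of a vertex set \<open>T\<close> therefore shows that the average degree in the
  subgraph induced by \<open>T\<close> is at most \<open>(r - 1) \<lambda>\<close>, so \<open>T\<close> has a vertex of degree at
  most \<open>D = \<lfloor>(r - 1) \<lambda>\<rfloor>\<close>. Colouring greedily along such vertices uses at most
  \<open>D + 1\<close> colours.\<close>

lemma linear_le_quadratic_imp_zero:
  fixes a b :: real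
  assumes "b \<ge> 0" and "\<And>t. 2 * t * a \<le> t\<^sup>2 * b"
  shows "a = 0"
proof -
  define t where "t = a / (b + 1)"
  have a: "a = t * (b + 1)" using assms(1) by (simp add: t_def)
  have "2 * t * (t * (b + 1)) \<le> t\<^sup>2 * b" using assms(2)[of t] by (simp add: a)
  hence "t\<^sup>2 * (b + 2) \<le> 0" by (simp add: algebra_simps power2_eq_square)
  with assms(1) have "t = 0" by (simp add: mult_le_0_iff)
  thus ?thesis by (simp add: a)
qed

lemma symmetric_matrix_inner_commute:
  fixes A :: "real^'n^'n"
  assumes "\<And>i j. A$i$j = A$j$i"
  shows "x \<bullet> (A *v y) = (A *v x) \<bullet> y"
proof -
  have "x \<bullet> (A *v y) = (\<Sum>i\<in>UNIV. \<Sum>j\<in>UNIV. x$i * A$i$j * y$j)"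
    by (simp add: inner_vec_def matrix_vector_mult_def sum_distrib_left mult.assoc)
  also have "\<dots> = (\<Sum>j\<in>UNIV. \<Sum>i\<in>UNIV. x$i * A$i$j * y$j)"
    by (rule sum.swap)
  also have "\<dots> = (\<Sum>j\<in>UNIV. (\<Sum>i\<in>UNIV. A$j$i * x$i) * y$j)"
    by (intro sum.cong refl) (simp add: sum_distrib_right sum_distrib_left mult_ac assms)
  also have "\<dots> = (A *v x) \<bullet> y"
    by (simp add: inner_vec_def matrix_vector_mult_def)
  finally show ?thesis .
qed

lemma symmetric_quadratic_form_add_scaleR:
  fixes A :: "real^'n^'n"
  assumes "\<And>i j. A$i$j = A$j$i"
  shows "(x + t *\<^sub>R y) \<bullet> (A *v (x + t *\<^sub>R y))
     = x \<bullet> (A *v x) + 2 * t * (y \<bullet> (A *v x)) + t\<^sup>2 * (y \<bullet> (A *v y))"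
proof -
  have "x \<bullet> (A *v y) = y \<bullet> (A *v x)"
    using symmetric_matrix_inner_commute[OF assms, of x y] by (simp add: inner_commute)
  then show ?thesis
    by (simp add: matrix_vector_right_distrib matrix_vector_mult_scaleR inner_add_left
        inner_add_right algebra_simps power2_eq_square)
qed

lemma quadratic_form_le_max_on_sphere:
  fixes A :: "real^'n^'n"
  obtains x0 where "x0 \<bullet> x0 = 1" and "\<And>x. x \<bullet> (A *v x) \<le> (x0 \<bullet> (A *v x0)) * (x \<bullet> x)"
proof -
  define q where "q x = x \<bullet> (A *v x)" for x
  have "continuous_on (sphere 0 1) q" unfolding q_def by (intro continuous_intros)
  then obtain x0 where x0: "x0 \<in> sphere (0::real^'n) 1" "\<And>y. y \<in> sphere 0 1 \<Longrightarrow> q y \<le> q x0"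
    using continuous_attains_sup[OF compact_sphere] by (metis sphere_eq_empty zero_le_one not_less)
  have "q x \<le> q x0 * (x \<bullet> x)" for x
  proof (cases "x = 0")
    case False
    have "q x = (norm x)\<^sup>2 * q ((1 / norm x) *\<^sub>R x)"
      using False by (simp add: q_def matrix_vector_mult_scaleR power2_eq_square)
    also have "\<dots> \<le> (norm x)\<^sup>2 * q x0"
      using False by (intro mult_left_mono x0(2)) auto
    finally show ?thesis by (simp add: dot_square_norm mult.commute)
  qed (simp add: q_def)
  moreover have "x0 \<bullet> x0 = 1" using x0(1) by (simp add: dot_square_norm)
  ultimately show ?thesis using that unfolding q_def by blast
qed

text \<open>Perturbing \<open>x0\<close> to \<open>x0 + t y\<close> gives an inequality linear in \<open>t\<close> on the left and
  quadratic on the right, so the linear coefficient \<open>y \<bullet> (A x0 - M x0)\<close> vanishes.\<close>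

lemma rayleigh_maximiser_eigenvector:
  fixes A :: "real^'n^'n"
  assumes sym: "\<And>i j. A$i$j = A$j$i"
    and bound: "\<And>x. x \<bullet> (A *v x) \<le> M * (x \<bullet> x)"
    and attained: "x0 \<bullet> (A *v x0) = M * (x0 \<bullet> x0)"
  shows "A *v x0 = M *\<^sub>R x0"
proof -
  define w where "w = A *v x0 - M *\<^sub>R x0"
  have "y \<bullet> w = 0" for y
  proof (rule linear_le_quadratic_imp_zero)
    show "M * (y \<bullet> y) - y \<bullet> (A *v y) \<ge> 0" using bound[of y] by simp
    fix t
    have "x0 \<bullet> (A *v x0) + 2 * t * (y \<bullet> (A *v x0)) + t\<^sup>2 * (y \<bullet> (A *v y))
        \<le> M * ((x0 + t *\<^sub>R y) \<bullet> (x0 + t *\<^sub>R y))"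
      using bound[of "x0 + t *\<^sub>R y"] by (simp only: symmetric_quadratic_form_add_scaleR[OF sym])
    also have "\<dots> = M * (x0 \<bullet> x0) + 2 * t * (M * (y \<bullet> x0)) + t\<^sup>2 * (M * (y \<bullet> y))"
      by (simp add: inner_add_left inner_add_right inner_commute algebra_simps power2_eq_square)
    finally show "2 * t * (y \<bullet> w) \<le> t\<^sup>2 * (M * (y \<bullet> y) - y \<bullet> (A *v y))"
      by (simp add: w_def attained inner_diff_right algebra_simps)
  qed
  hence "w = 0" by (metis inner_eq_zero_iff)
  thus ?thesis by (simp add: w_def)
qed

lemma eigenvalue_le_rayleigh_bound:
  assumes "is_eigenvalue A \<mu>" and "\<And>x. x \<bullet> (A *v x) \<le> M * (x \<bullet> x)"
  shows "\<mu> \<le> M"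
proof -
  obtain v where v: "v \<noteq> 0" "A *v v = \<mu> *\<^sub>R v" using assms(1) unfolding is_eigenvalue_def by blast
  have "\<mu> * (v \<bullet> v) \<le> M * (v \<bullet> v)" using assms(2)[of v] v(2) by simp
  moreover have "v \<bullet> v > 0" using v(1) by simp
  ultimately show ?thesis by (rule mult_right_le_imp_le)
qed

text \<open>Eigenvectors for distinct eigenvalues of a symmetric matrix are orthogonal, hence
  linearly independent; so there are at most \<open>CARD('n)\<close> eigenvalues.\<close>

lemma finite_eigenvalues_symmetric:
  fixes A :: "real^'n^'n"
  assumes sym: "\<And>i j. A$i$j = A$j$i"
  shows "finite {\<mu>. is_eigenvalue A \<mu>}"
proof -
  define S where "S = {\<mu>. is_eigenvalue A \<mu>}"
  define f where "f \<mu> = (SOME v. v \<noteq> 0 \<and> A *v v = \<mu> *\<^sub>R v)" for \<mu>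
  have f: "f \<mu> \<noteq> 0" "A *v f \<mu> = \<mu> *\<^sub>R f \<mu>" if "\<mu> \<in> S" for \<mu>
    using someI_ex[of "\<lambda>v. v \<noteq> 0 \<and> A *v v = \<mu> *\<^sub>R v"] that
    unfolding S_def is_eigenvalue_def f_def by auto
  have orth: "f \<mu> \<bullet> f \<nu> = 0" if "\<mu> \<in> S" "\<nu> \<in> S" "\<mu> \<noteq> \<nu>" for \<mu> \<nu>
  proof -
    have "\<mu> * (f \<mu> \<bullet> f \<nu>) = \<nu> * (f \<mu> \<bullet> f \<nu>)"
      using symmetric_matrix_inner_commute[OF sym, of "f \<mu>" "f \<nu>"] f[OF that(1)] f[OF that(2)]
      by auto
    thus ?thesis using that(3) by simp
  qed
  have "inj_on f S"
    by (rule inj_onI) (metis f(1) orth inner_eq_zero_iff)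
  moreover have "independent (f ` S)"
    by (rule pairwise_orthogonal_independent) (auto simp: pairwise_def orthogonal_def f(1) intro: orth)
  hence "finite (f ` S)" using independent_bound by blast
  ultimately show ?thesis unfolding S_def[symmetric] using finite_imageD by blast
qed

lemma rayleigh_le_lambda_max:
  fixes A :: "real^'n^'n"
  assumes sym: "\<And>i j. A$i$j = A$j$i"
  shows "x \<bullet> (A *v x) \<le> lambda_max A * (x \<bullet> x)"
proof -
  obtain x0 where x0: "x0 \<bullet> x0 = 1" and bound: "\<And>x. x \<bullet> (A *v x) \<le> (x0 \<bullet> (A *v x0)) * (x \<bullet> x)"
    using quadratic_form_le_max_on_sphere[of A] by blast
  define M where "M = x0 \<bullet> (A *v x0)"
  have "A *v x0 = M *\<^sub>R x0"
    using rayleigh_maximiser_eigenvector[OF sym] bound x0 unfolding M_def by simp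
  moreover have "x0 \<noteq> 0" using x0 by auto
  ultimately have "is_eigenvalue A M" unfolding is_eigenvalue_def by blast
  hence "lambda_max A = M"
    unfolding lambda_max_def using finite_eigenvalues_symmetric[OF sym]
      eigenvalue_le_rayleigh_bound[OF _ bound] by (intro Max_eqI) (auto simp: M_def)
  thus ?thesis using bound unfolding M_def by simp
qed

lemma lambda_max_zero: "lambda_max (0 :: real^'n^'n) = 0"
proof -
  have "is_eigenvalue (0 :: real^'n^'n) \<mu> \<longleftrightarrow> \<mu> = 0" for \<mu>
    unfolding is_eigenvalue_def by (auto intro: exI[of _ 1])
  thus ?thesis by (simp add: lambda_max_def)
qed

lemma quadratic_form_indicator:
  fixes A :: "real^'n^'n" and T :: "'n set"
  shows "(\<chi> i. if i \<in> T then 1 else 0) \<bullet> (A *v (\<chi> i. if i \<in> T then 1 else 0))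
           = (\<Sum>i\<in>T. \<Sum>j\<in>T. A$i$j)"
    and "(\<chi> i. if i \<in> T then 1 else 0) \<bullet> (\<chi> i. if i \<in> T then 1 else 0 :: real^'n)
           = real (card T)"
  unfolding inner_vec_def matrix_vector_mult_def
  by (simp_all add: if_distrib[where f="\<lambda>x. x * _"] if_distrib[where f="\<lambda>x. _ * x"]
      sum.If_cases Int_def cong: if_cong)

lemma exists_unused_colour:
  assumes "finite U" and "card U \<le> D"
  obtains k :: nat where "k < Suc D" and "k \<notin> U"
proof -
  have "\<not> {..<Suc D} \<subseteq> U"
    using card_mono[OF assms(1), of "{..<Suc D}"] assms(2) by auto
  thus ?thesis using that by blast
qed

text \<open>Remove a vertex of degree at most \<open>D\<close>, colour the rest, and give the removed vertex
  a colour missed by its neighbours.\<close>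

lemma degenerate_graph_colouring:
  fixes adj :: "'a \<Rightarrow> 'a \<Rightarrow> bool" and D :: nat
  assumes "finite S" and sym: "\<And>i j. adj i j \<Longrightarrow> adj j i" and irrefl: "\<And>i. \<not> adj i i"
    and "\<And>T. T \<subseteq> S \<Longrightarrow> T \<noteq> {} \<Longrightarrow> \<exists>v\<in>T. card {u\<in>T. adj v u} \<le> D"
  shows "\<exists>c. (\<forall>v. c v < Suc D) \<and> (\<forall>i\<in>S. \<forall>j\<in>S. adj i j \<longrightarrow> c i \<noteq> c j)"
  using assms(1,4)
proof (induction S rule: finite_psubset_induct)
  case (psubset S)
  show ?case
  proof (cases "S = {}")
    case True
    thus ?thesis by (intro exI[of _ "\<lambda>_. 0"]) auto
  next
    case False
    then obtain v where v: "v \<in> S" "card {u\<in>S. adj v u} \<le> D"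
      using psubset.prems[of S] by auto
    have "S - {v} \<subset> S" using v(1) by auto
    hence "\<exists>c. (\<forall>v. c v < Suc D) \<and> (\<forall>i\<in>S - {v}. \<forall>j\<in>S - {v}. adj i j \<longrightarrow> c i \<noteq> c j)"
      by (rule psubset.IH) (auto intro!: psubset.prems)
    then obtain c where
      c: "\<forall>v. c v < Suc D" "\<forall>i\<in>S - {v}. \<forall>j\<in>S - {v}. adj i j \<longrightarrow> c i \<noteq> c j"
      by blast
    have "finite (c ` {u\<in>S. adj v u})" using psubset.hyps by simp
    moreover have "card (c ` {u\<in>S. adj v u}) \<le> D"
      using card_image_le[of "{u\<in>S. adj v u}" c] psubset.hyps v(2) by simp
    ultimately obtain k where k: "k < Suc D" "k \<notin> c ` {u\<in>S. adj v u}"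
      by (rule exists_unused_colour)
    have "(c(v := k)) i \<noteq> (c(v := k)) j" if "i \<in> S" "j \<in> S" "adj i j" for i j
      using that c(2) k(2) sym irrefl by (cases "i = v"; cases "j = v") (auto simp: image_iff dest: sym)
    with c(1) k(1) show ?thesis by (intro exI[of _ "c(v := k)"]) auto
  qed
qed

lemma strong_chromatic_number_le:
  "strong_coloring E c k \<Longrightarrow> strong_chromatic_number E \<le> k"
  unfolding strong_chromatic_number_def by (rule Least_le) blast

lemma hg_adjacent_sym: "hg_adjacent E i j \<Longrightarrow> hg_adjacent E j i"
  unfolding hg_adjacent_def by blast

lemma hg_adjacent_irrefl: "\<not> hg_adjacent E i i"
  unfolding hg_adjacent_def by simp

lemma hg_adj_matrix_symmetric: "hg_adj_matrix E $ i $ j = hg_adj_matrix E $ j $ i"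
  unfolding hg_adj_matrix_def by (simp add: conj_commute eq_commute)

lemma hg_adj_matrix_empty: "hg_adj_matrix {} = 0"
  unfolding hg_adj_matrix_def by (simp add: vec_eq_iff)

lemma hg_rank_ge_edge_card:
  assumes "e \<in> E"
  shows "card e \<le> hg_rank E"
  using assms by (auto simp: hg_rank_def)

lemma hg_rank_ge_2:
  assumes "hypergraph E" and "E \<noteq> {}"
  shows "hg_rank E \<ge> 2"
proof -
  obtain e where e: "e \<in> E" using assms(2) by blast
  hence "card e \<ge> 2" using assms(1) unfolding hypergraph_def by blast
  thus ?thesis using hg_rank_ge_edge_card[OF e] by linarith
qed

lemma hg_adj_matrix_nonneg:
  assumes "hypergraph E"
  shows "hg_adj_matrix E $ i $ j \<ge> 0"
proof -
  have "1 / (real (card e) - 1) \<ge> 0" if "e \<in> E" for e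
    using assms that unfolding hypergraph_def by force
  thus ?thesis unfolding hg_adj_matrix_def by (auto intro!: sum_nonneg)
qed

lemma hg_adj_matrix_adjacent_ge:
  assumes "hypergraph E" and "hg_adjacent E i j"
  shows "hg_adj_matrix E $ i $ j \<ge> 1 / (real (hg_rank E) - 1)"
proof -
  obtain e where e: "e \<in> E" "i \<in> e" "j \<in> e" and "i \<noteq> j"
    using assms(2) unfolding hg_adjacent_def by blast
  have "card e \<ge> 2" using assms(1) e(1) unfolding hypergraph_def by blast
  hence "1 / (real (hg_rank E) - 1) \<le> 1 / (real (card e) - 1)"
    using hg_rank_ge_edge_card[OF e(1)] by (intro divide_left_mono) auto
  also have "\<dots> \<le> (\<Sum>e\<in>{e\<in>E. i \<in> e \<and> j \<in> e}. 1 / (real (card e) - 1))"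
    using assms(1) e unfolding hypergraph_def by (intro member_le_sum) (auto simp: le_diff_eq)
  also have "\<dots> = hg_adj_matrix E $ i $ j" unfolding hg_adj_matrix_def using \<open>i \<noteq> j\<close> by simp
  finally show ?thesis .
qed

lemma hg_degree_le_row_sum:
  assumes "hypergraph E" and "E \<noteq> {}"
  shows "real (card {u\<in>T. hg_adjacent E i u})
           \<le> (real (hg_rank E) - 1) * (\<Sum>j\<in>T. hg_adj_matrix E $ i $ j)"
proof -
  define r1 where "r1 = real (hg_rank E) - 1"
  have "r1 \<ge> 1" using hg_rank_ge_2[OF assms] by (simp add: r1_def)
  hence "real (card {u\<in>T. hg_adjacent E i u}) = r1 * (\<Sum>j\<in>{u\<in>T. hg_adjacent E i u}. 1 / r1)"
    by simp
  also have "\<dots> \<le> r1 * (\<Sum>j\<in>{u\<in>T. hg_adjacent E i u}. hg_adj_matrix E $ i $ j)"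
    using \<open>r1 \<ge> 1\<close> hg_adj_matrix_adjacent_ge[OF assms(1)] unfolding r1_def
    by (intro mult_left_mono sum_mono) auto
  also have "\<dots> \<le> r1 * (\<Sum>j\<in>T. hg_adj_matrix E $ i $ j)"
    using \<open>r1 \<ge> 1\<close> hg_adj_matrix_nonneg[OF assms(1)]
    by (intro mult_left_mono sum_mono2) auto
  finally show ?thesis unfolding r1_def .
qed

lemma hg_exists_low_degree_vertex:
  fixes E :: "'n::finite set set"
  assumes "hypergraph E" and "E \<noteq> {}" and "T \<noteq> {}"
  defines "d \<equiv> (real (hg_rank E) - 1) * lambda_max (hg_adj_matrix E)"
  shows "\<exists>v\<in>T. real (card {u\<in>T. hg_adjacent E v u}) \<le> d"
proof (rule ccontr)
  assume "\<not> ?thesis"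
  hence "(\<Sum>v\<in>T. d) < (\<Sum>v\<in>T. real (card {u\<in>T. hg_adjacent E v u}))"
    using assms(3) by (intro sum_strict_mono) auto
  also have "\<dots> \<le> (\<Sum>i\<in>T. (real (hg_rank E) - 1) * (\<Sum>j\<in>T. hg_adj_matrix E $ i $ j))"
    by (intro sum_mono hg_degree_le_row_sum assms(1,2))
  also have "\<dots> = (real (hg_rank E) - 1) * (\<Sum>i\<in>T. \<Sum>j\<in>T. hg_adj_matrix E $ i $ j)"
    by (rule sum_distrib_left[symmetric])
  also have "\<dots> \<le> (real (hg_rank E) - 1) * (lambda_max (hg_adj_matrix E) * real (card T))"
    using rayleigh_le_lambda_max[OF hg_adj_matrix_symmetric] hg_rank_ge_2[OF assms(1,2)]
    by (intro mult_left_mono) (auto simp flip: quadratic_form_indicator)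
  finally show False by (simp add: d_def mult_ac)
qed

theorem theorem3:
  fixes E :: "'n::finite set set"
  assumes "hypergraph E"
  shows "real (strong_chromatic_number E)
           \<le> 1 + (real (hg_rank E) - 1) * lambda_max (hg_adj_matrix E)"
proof (cases "E = {}")
  case True
  have "strong_coloring E (\<lambda>_. 0) 1"
    using True by (simp add: strong_coloring_def hg_adjacent_def)
  hence "strong_chromatic_number E \<le> 1" by (rule strong_chromatic_number_le)
  with True show ?thesis by (simp add: hg_rank_def hg_adj_matrix_empty lambda_max_zero)
next
  case False
  define d where "d = (real (hg_rank E) - 1) * lambda_max (hg_adj_matrix E)"
  define D where "D = nat \<lfloor>d\<rfloor>"
  have low_degree: "\<exists>v\<in>T. card {u\<in>T. hg_adjacent E v u} \<le> D" if "T \<noteq> {}" for T :: "'n set"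
    using hg_exists_low_degree_vertex[OF assms False that] unfolding D_def d_def
    by (blast intro: le_nat_floor)
  have "\<exists>c. (\<forall>v. c v < Suc D) \<and> (\<forall>i\<in>UNIV. \<forall>j\<in>UNIV. hg_adjacent E i j \<longrightarrow> c i \<noteq> c j)"
    by (rule degenerate_graph_colouring[of UNIV "hg_adjacent E",
          OF finite hg_adjacent_sym hg_adjacent_irrefl low_degree])
  then obtain c where "strong_coloring E c (Suc D)" unfolding strong_coloring_def by blast
  hence "strong_chromatic_number E \<le> Suc D" by (rule strong_chromatic_number_le)
  moreover have "d \<ge> 0"
    using hg_exists_low_degree_vertex[OF assms False, of "{undefined}"] unfolding d_def by simp
  ultimately show ?thesis unfolding d_def[symmetric] D_def by linarith
qed

end
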